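(* Let $G$ be a group, $S$ a subgroup of $G$, and $T,U$ subsets of $G$. (i) If $(S,T,U)$ is a basic TPP triple of $G$, then $T$ and $U$ are subtransversals for $S$ in $G$ (with respect to the partition of $G$ into right cosets $S\backslash G$) such that $\operatorname{supp}_{S\backslash G}(T)\cap \operatorname{supp}_{S\backslash G}(U)=\{S\}$. (ii) If $T$ and $U$ are also subgroups of $G$, and $T$ and $U$ are subtransversals for $S$ in $G$ satisfying $\operatorname{supp}_{S\backslash G}(T)\cap \operatorname{supp}_{S\backslash G}(U)=\{S\}$, then $(S,T,U)$ is a TPP triple of $G$.
   Context: For a nonempty subset $X$ of a group $G$, $Q(X):=\{xy^{-1}: x,y\in X\}$. Nonempty subsets $S,T,U$ of $G$ form a TPP triple if for all $s\in Q(S)$, $t\in Q(T)$, $u\in Q(U)$: $stu=1$ iff $s=t=u=1$. A TPP triple is basic if $1\in S\cap T\cap U$. Let $C$ be a finite nonempty set and $\mathcal C$ a partition of $C$. A set $X\subseteq C$ is a subtransversal for $\mathcal C$ with support $\operatorname{supp}_{\mathcal C}(X)=\mathcal T\subseteq\mathcal C$ if for every block $C_i\in\mathcal C$, $|X\cap C_i|=1$ when $C_i\in\mathcal T$ and $|X\cap C_i|=0$ otherwise. For a subgroup $S$ of $G$, a subtransversal for $S$ in $G$ means a subtransversal for the partition $S\backslash G=\{Sr: r\in G\}$ of $G$ into right cosets of $S$. *)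

theory Defs
  imports "HOL-Algebra.Coset"
begin

definition quot_set :: "('a, 'b) monoid_scheme \<Rightarrow> 'a set \<Rightarrow> 'a set" where
  "quot_set G X = {x \<otimes>\<^bsub>G\<^esub> inv\<^bsub>G\<^esub> y | x y. x \<in> X \<and> y \<in> X}"

definition TPP_triple :: "('a, 'b) monoid_scheme \<Rightarrow> 'a set \<Rightarrow> 'a set \<Rightarrow> 'a set \<Rightarrow> bool" where
  "TPP_triple G S T U \<longleftrightarrow>
     S \<subseteq> carrier G \<and> T \<subseteq> carrier G \<and> U \<subseteq> carrier G \<and>
     S \<noteq> {} \<and> T \<noteq> {} \<and> U \<noteq> {} \<and>
     (\<forall>s \<in> quot_set G S. \<forall>t \<in> quot_set G T. \<forall>u \<in> quot_set G U.
        (s \<otimes>\<^bsub>G\<^esub> t \<otimes>\<^bsub>G\<^esub> u = \<one>\<^bsub>G\<^esub>) \<longleftrightarrow>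
        (s = \<one>\<^bsub>G\<^esub> \<and> t = \<one>\<^bsub>G\<^esub> \<and> u = \<one>\<^bsub>G\<^esub>))"

definition basic_TPP_triple :: "('a, 'b) monoid_scheme \<Rightarrow> 'a set \<Rightarrow> 'a set \<Rightarrow> 'a set \<Rightarrow> bool" where
  "basic_TPP_triple G S T U \<longleftrightarrow> TPP_triple G S T U \<and> \<one>\<^bsub>G\<^esub> \<in> S \<inter> T \<inter> U"

definition subtransversal_with_support :: "'a set set \<Rightarrow> 'a set \<Rightarrow> 'a set set \<Rightarrow> bool" where
  "subtransversal_with_support P X Ts \<longleftrightarrow>
     X \<subseteq> \<Union>P \<and> Ts \<subseteq> P \<and>
     (\<forall>B \<in> P. (B \<in> Ts \<longrightarrow> (\<exists>!x. x \<in> X \<inter> B)) \<and> (B \<notin> Ts \<longrightarrow> X \<inter> B = {}))"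

definition subtransversal :: "'a set set \<Rightarrow> 'a set \<Rightarrow> bool" where
  "subtransversal P X \<longleftrightarrow> (\<exists>Ts. subtransversal_with_support P X Ts)"

text \<open>The support (uniquely determined when X is a subtransversal).\<close>
definition supp :: "'a set set \<Rightarrow> 'a set \<Rightarrow> 'a set set" where
  "supp P X = (THE Ts. subtransversal_with_support P X Ts)"

end

theory Submission
  imports Defs
begin

text \<open>
  A subset X of G is a subtransversal for S\G as soon as no nontrivial quotient
  x y\<inverse> with x, y \<in> X lies in S. For a basic TPP triple, q \<in> Q(T) \<inter> S gives
  q\<inverse> q 1 = 1 with q\<inverse> \<in> Q(S) = S, so q = 1, and likewise for U; and t \<in> T, u \<in> U
  in a common coset give t u\<inverse> \<in> S, which forces t = 1, so that coset is S.
  Conversely, if s t u = 1 then t and u\<inverse> lie in the common coset S u\<inverse>, which is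
  therefore S; as 1 lies in T \<inter> S and in U \<inter> S too, t = u\<inverse> = 1.
\<close>

lemma subtransversal_with_support_eq:
  assumes "subtransversal_with_support P X Ts"
  shows "Ts = {B \<in> P. X \<inter> B \<noteq> {}}"
proof -
  have "Ts \<subseteq> P" and "\<And>B. B \<in> Ts \<Longrightarrow> \<exists>!x. x \<in> X \<inter> B"
    and "\<And>B. B \<in> P \<Longrightarrow> B \<notin> Ts \<Longrightarrow> X \<inter> B = {}"
    using assms unfolding subtransversal_with_support_def by auto
  then show ?thesis by blast
qed

lemma supp_eq:
  assumes "subtransversal P X"
  shows "supp P X = {B \<in> P. X \<inter> B \<noteq> {}}"
proof -
  obtain Ts where Ts: "subtransversal_with_support P X Ts"
    using assms unfolding subtransversal_def by blast
  then have "supp P X = Ts"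
    unfolding supp_def
    by (rule the_equality) (metis Ts subtransversal_with_support_eq)
  then show ?thesis
    using subtransversal_with_support_eq[OF Ts] by simp
qed

lemma subtransversal_iff:
  "subtransversal P X \<longleftrightarrow> X \<subseteq> \<Union>P \<and> (\<forall>B \<in> P. \<forall>x \<in> X \<inter> B. \<forall>y \<in> X \<inter> B. x = y)"
proof
  assume "subtransversal P X"
  then show "X \<subseteq> \<Union>P \<and> (\<forall>B \<in> P. \<forall>x \<in> X \<inter> B. \<forall>y \<in> X \<inter> B. x = y)"
    unfolding subtransversal_def subtransversal_with_support_def by blast
next
  assume X: "X \<subseteq> \<Union>P \<and> (\<forall>B \<in> P. \<forall>x \<in> X \<inter> B. \<forall>y \<in> X \<inter> B. x = y)"
  have "subtransversal_with_support P X {B \<in> P. X \<inter> B \<noteq> {}}"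
    unfolding subtransversal_with_support_def using X by blast
  then show "subtransversal P X"
    unfolding subtransversal_def by blast
qed

lemma subtransversal_unique:
  assumes "subtransversal P X" "B \<in> P" "x \<in> X \<inter> B" "y \<in> X \<inter> B"
  shows "x = y"
  using assms unfolding subtransversal_iff by blast

lemma supp_inter_singletonD:
  assumes "subtransversal P X" "subtransversal P Y" "supp P X \<inter> supp P Y = {B\<^sub>0}"
    and "B \<in> P" "x \<in> X \<inter> B" "y \<in> Y \<inter> B"
  shows "B = B\<^sub>0"
  using assms by (auto simp: supp_eq)

lemma quot_setI: "x \<in> X \<Longrightarrow> y \<in> X \<Longrightarrow> x \<otimes>\<^bsub>G\<^esub> inv\<^bsub>G\<^esub> y \<in> quot_set G X"
  unfolding quot_set_def by blast

context group
begin

lemma quot_set_subset_carrier: "X \<subseteq> carrier G \<Longrightarrow> quot_set G X \<subseteq> carrier G"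
  unfolding quot_set_def by auto

lemma quot_set_subgroup:
  assumes "subgroup H G"
  shows "quot_set G H = H"
proof
  show "quot_set G H \<subseteq> H"
    unfolding quot_set_def using assms by (auto intro: subgroup.m_closed subgroup.m_inv_closed)
  show "H \<subseteq> quot_set G H"
  proof
    fix x assume "x \<in> H"
    then have "x \<otimes> inv \<one> \<in> quot_set G H"
      using assms by (intro quot_setI) (auto intro: subgroup.one_closed)
    then show "x \<in> quot_set G H"
      using \<open>x \<in> H\<close> assms subgroup.mem_carrier by fastforce
  qed
qed

lemma rcosets_mult_inv_mem:
  assumes "subgroup H G" "B \<in> rcosets H" "x \<in> B" "y \<in> B"
  shows "x \<otimes> inv y \<in> H"
proof -
  obtain a where a: "a \<in> carrier G" "B = H #> a"
    using assms(2) unfolding RCOSETS_def by blast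
  have "y \<in> carrier G"
    using assms subgroup.rcosets_carrier is_group by blast
  moreover have "x \<in> H #> y"
    using assms(3,4) a repr_independence[OF _ a(1) assms(1)] by simp
  ultimately show ?thesis
    using subgroup.rcos_module_imp[OF assms(1) is_group] by blast
qed

lemma rcosets_eq_subgroup_if_one_mem:
  assumes "subgroup H G" "B \<in> rcosets H" "\<one> \<in> B"
  shows "B = H"
  using rcos_disjoint[OF assms(1)] subgroup.subgroup_in_rcosets[OF assms(1) is_group]
    subgroup.one_closed[OF assms(1)] assms(2,3)
  unfolding pairwise_def disjnt_def by blast

lemma subtransversal_rcosetsI:
  assumes "subgroup H G" "X \<subseteq> carrier G"
    and trivial: "\<And>q. q \<in> quot_set G X \<Longrightarrow> q \<in> H \<Longrightarrow> q = \<one>"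
  shows "subtransversal (rcosets H) X"
  unfolding subtransversal_iff
proof (intro conjI ballI)
  show "X \<subseteq> \<Union>(rcosets H)"
    using assms(2) rcosets_part_G[OF assms(1)] by simp
  fix B x y assume B: "B \<in> rcosets H" and x: "x \<in> X \<inter> B" and y: "y \<in> X \<inter> B"
  have "x \<otimes> inv y = \<one>"
    using trivial quot_setI[of x X y G] rcosets_mult_inv_mem[OF assms(1) B, of x y] x y by blast
  then show "x = y"
    using assms(2) x y inv_solve_right'[of \<one> x y] by auto
qed

lemma TPP_triple_mult_mem_subgroup:
  assumes "TPP_triple G S T U" "subgroup S G"
    and t: "t \<in> quot_set G T" and u: "u \<in> quot_set G U" and "t \<otimes> u \<in> S"
  shows "t = \<one> \<and> u = \<one>"
proof -
  have tpp: "\<forall>s \<in> quot_set G S. \<forall>t \<in> quot_set G T. \<forall>u \<in> quot_set G U.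
      s \<otimes> t \<otimes> u = \<one> \<longleftrightarrow> s = \<one> \<and> t = \<one> \<and> u = \<one>"
    and "T \<subseteq> carrier G" "U \<subseteq> carrier G"
    using assms(1) unfolding TPP_triple_def by auto
  then have tc: "t \<in> carrier G" and uc: "u \<in> carrier G"
    using t u quot_set_subset_carrier by blast+
  have "inv (t \<otimes> u) \<in> quot_set G S"
    using assms(2,5) quot_set_subgroup subgroup.m_inv_closed by fastforce
  moreover have "inv (t \<otimes> u) \<otimes> t \<otimes> u = \<one>"
    using tc uc by (simp add: m_assoc)
  ultimately show ?thesis
    using tpp t u by blast
qed

theorem basic_TPP_triple_imp_subtransversals:
  assumes S: "subgroup S G" and tpp: "basic_TPP_triple G S T U"
  shows "subtransversal (rcosets S) T \<and> subtransversal (rcosets S) U \<and>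
         supp (rcosets S) T \<inter> supp (rcosets S) U = {S}"
proof -
  have TPP: "TPP_triple G S T U" and "\<one> \<in> T" "\<one> \<in> U"
    and T: "T \<subseteq> carrier G" and U: "U \<subseteq> carrier G"
    using tpp unfolding basic_TPP_triple_def TPP_triple_def by auto
  then have one_T: "\<one> \<in> quot_set G T" and one_U: "\<one> \<in> quot_set G U"
    using quot_setI[of \<one> T \<one> G] quot_setI[of \<one> U \<one> G] by auto
  have stT: "subtransversal (rcosets S) T"
  proof (rule subtransversal_rcosetsI[OF S T])
    fix q assume "q \<in> quot_set G T" "q \<in> S"
    then show "q = \<one>"
      using TPP_triple_mult_mem_subgroup[OF TPP S _ one_U] quot_set_subset_carrier[OF T] by auto
  qed
  have stU: "subtransversal (rcosets S) U"
  proof (rule subtransversal_rcosetsI[OF S U])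
    fix q assume "q \<in> quot_set G U" "q \<in> S"
    then show "q = \<one>"
      using TPP_triple_mult_mem_subgroup[OF TPP S one_T] quot_set_subset_carrier[OF U] by auto
  qed
  have "B = S" if B: "B \<in> rcosets S" and t: "t \<in> T \<inter> B" and u: "u \<in> U \<inter> B" for B t u
  proof -
    have tc: "t \<in> carrier G" and uc: "u \<in> carrier G"
      using T U t u by auto
    have "t \<in> quot_set G T" "inv u \<in> quot_set G U"
      using quot_setI[of t T \<one> G] quot_setI[of \<one> U u G] t u \<open>\<one> \<in> T\<close> \<open>\<one> \<in> U\<close> tc uc
      by auto
    moreover have "t \<otimes> inv u \<in> S"
      using rcosets_mult_inv_mem[OF S B] t u by blast
    ultimately have "t = \<one>"
      using TPP_triple_mult_mem_subgroup[OF TPP S] uc by simp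
    then show ?thesis
      using rcosets_eq_subgroup_if_one_mem[OF S B] t by simp
  qed
  moreover have "S \<in> supp (rcosets S) T \<inter> supp (rcosets S) U"
    using subgroup.subgroup_in_rcosets[OF S is_group] subgroup.one_closed[OF S]
      \<open>\<one> \<in> T\<close> \<open>\<one> \<in> U\<close> by (auto simp: supp_eq stT stU)
  ultimately have "supp (rcosets S) T \<inter> supp (rcosets S) U = {S}"
    by (auto simp: supp_eq stT stU)
  with stT stU show ?thesis by blast
qed

theorem subtransversal_subgroups_imp_TPP_triple:
  assumes S: "subgroup S G" and T: "subgroup T G" and U: "subgroup U G"
    and stT: "subtransversal (rcosets S) T" and stU: "subtransversal (rcosets S) U"
    and supp: "supp (rcosets S) T \<inter> supp (rcosets S) U = {S}"
  shows "TPP_triple G S T U"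
proof -
  have S_in: "S \<in> rcosets S"
    using subgroup.subgroup_in_rcosets[OF S is_group] .
  have trivial: "s = \<one> \<and> t = \<one> \<and> u = \<one>"
    if s: "s \<in> S" and t: "t \<in> T" and u: "u \<in> U" and stu: "s \<otimes> t \<otimes> u = \<one>" for s t u
  proof -
    have sc: "s \<in> carrier G" and tc: "t \<in> carrier G" and uc: "u \<in> carrier G"
      using s t u subgroup.mem_carrier[OF S] subgroup.mem_carrier[OF T] subgroup.mem_carrier[OF U]
      by auto
    have "s \<otimes> (t \<otimes> u) = \<one>"
      using stu sc tc uc by (simp add: m_assoc)
    then have "inv s = t \<otimes> u"
      using sc tc uc inv_comm[of s "t \<otimes> u"] inv_equality[of "t \<otimes> u" s] by simp
    then have "t \<otimes> inv (inv u) \<in> S"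
      using s sc uc subgroup.m_inv_closed[OF S] by fastforce
    then have t_coset: "t \<in> S #> inv u"
      using subgroup.rcos_module_rev[OF S is_group] tc uc by simp
    have u_coset: "inv u \<in> S #> inv u"
      using rcos_self[OF _ S] uc by simp
    have inv_u: "inv u \<in> U"
      using subgroup.m_inv_closed[OF U u] .
    have "S #> inv u \<in> rcosets S"
      using rcosetsI[OF subgroup.subset[OF S]] uc by simp
    then have coset: "S #> inv u = S"
      using supp_inter_singletonD[OF stT stU supp] t t_coset inv_u u_coset by blast
    have "t = \<one>"
      using subtransversal_unique[OF stT S_in, of t \<one>] t t_coset coset
        subgroup.one_closed[OF S] subgroup.one_closed[OF T] by simp
    moreover have "inv u = \<one>"
      using subtransversal_unique[OF stU S_in, of "inv u" \<one>] inv_u u_coset coset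
        subgroup.one_closed[OF S] subgroup.one_closed[OF U] by simp
    ultimately show ?thesis
      using stu sc uc by simp
  qed
  show ?thesis
    unfolding TPP_triple_def quot_set_subgroup[OF S] quot_set_subgroup[OF T] quot_set_subgroup[OF U]
    using trivial subgroup.subset[OF S] subgroup.subset[OF T] subgroup.subset[OF U]
      subgroup.one_closed[OF S] subgroup.one_closed[OF T] subgroup.one_closed[OF U]
    by auto
qed

end

theorem mainTheorem2:
  fixes G (structure) and S T U :: "'a set"
  assumes "group G" and "subgroup S G"
    and "T \<subseteq> carrier G" and "U \<subseteq> carrier G"
  shows "(basic_TPP_triple G S T U \<longrightarrow>
            subtransversal (rcosets S) T \<and> subtransversal (rcosets S) U \<and>
            supp (rcosets S) T \<inter> supp (rcosets S) U = {S})
       \<and> (subgroup T G \<and> subgroup U G \<and>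
            subtransversal (rcosets S) T \<and> subtransversal (rcosets S) U \<and>
            supp (rcosets S) T \<inter> supp (rcosets S) U = {S}
          \<longrightarrow> TPP_triple G S T U)"
proof -
  interpret group G by fact
  show ?thesis
    by (simp add: basic_TPP_triple_imp_subtransversals[OF assms(2)]
        subtransversal_subgroups_imp_TPP_triple[OF assms(2)])
qed

end
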